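(* For $n\ge1$ and $1\le r\le n$, the number of rooted spanning hyperforests of $\overline{\mathcal K}_n$ with exactly $r$ components is $$t_{n,r}(\mathbf 1)=\binom{n-1}{r-1}b_{n-r}(n)=\binom{n-1}{r-1}\sum_{\ell\ge0}\left\{{n-r\atop \ell}\right\}n^{\ell},$$ the total number of rooted spanning hyperforests of $\overline{\mathcal K}_n$ is $\sum_{r\ge1}t_{n,r}(\mathbf 1)=\frac{b_n(n)}{n}$, and the number of (unrooted) spanning hypertrees of $\overline{\mathcal K}_n$ is $\frac{b_{n-1}(n)}{n}=\sum_{\ell\ge0}\left\{{n-1\atop \ell}\right\}n^{\ell-1}$.
   Context: $\overline{\mathcal K}_n$ is the complete hypergraph on vertex set $\{1,\dots,n\}$ whose hyperedges are all subsets of cardinality $\ge2$. A cycle is a sequence $(v_0,e_1,v_1,\dots,e_\ell,v_\ell)$ with $\ell\ge2$, $v_{i-1},v_i\in e_i$, $v_0,\dots,v_{\ell-1}$ distinct, $v_\ell=v_0$, $e_1,\dots,e_\ell$ distinct hyperedges. A spanning hyperforest is a set of hyperedges with no cycle; components are the classes of vertices connected by walks (isolated vertices included); a spanning hypertree is a spanning hyperforest with one component; a rooted spanning hyperforest has one distinguished root per component. $\left\{{s\atop \ell}\right\}$ is the Stirling number of the second kind (number of partitions of an $s$-set into $\ell$ nonempty blocks, with $\left\{{0\atop 0}\right\}=1$), and $b_s(x):=\sum_{\ell\ge0}\left\{{s\atop \ell}\right\}x^\ell$ is the Bell polynomial, with $\sum_{s\ge0}b_s(x)y^s/s!=e^{x(e^y-1)}$.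 *)

theory Defs
  imports Complex_Main "HOL-Combinatorics.Stirling"
begin

definition hyperedges :: "nat \<Rightarrow> nat set set" where
  "hyperedges n = {e. e \<subseteq> {1..n} \<and> 2 \<le> card e}"

text \<open>A cycle (v0,e1,v1,...,el,vl): vs = [v0..v_(l-1)], es = [e1..el], with v_l = v_0.\<close>
definition has_cycle :: "nat set set \<Rightarrow> bool" where
  "has_cycle F \<longleftrightarrow> (\<exists>vs es. 2 \<le> length vs \<and> length es = length vs \<and>
      distinct vs \<and> distinct es \<and> set es \<subseteq> F \<and>
      (\<forall>i < length vs. vs ! i \<in> es ! i \<and> vs ! (Suc i mod length vs) \<in> es ! i))"

definition spanning_hyperforest :: "nat \<Rightarrow> nat set set \<Rightarrow> bool" where
  "spanning_hyperforest n F \<longleftrightarrow> F \<subseteq> hyperedges n \<and> \<not> has_cycle F"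

definition hconn :: "nat set set \<Rightarrow> nat \<Rightarrow> nat \<Rightarrow> bool" where
  "hconn F = (\<lambda>x y. \<exists>e\<in>F. x \<in> e \<and> y \<in> e)\<^sup>*\<^sup>*"

definition hcomponents :: "nat \<Rightarrow> nat set set \<Rightarrow> nat set set" where
  "hcomponents n F = (\<lambda>u. {v \<in> {1..n}. hconn F u v}) ` {1..n}"

definition spanning_hypertree :: "nat \<Rightarrow> nat set set \<Rightarrow> bool" where
  "spanning_hypertree n F \<longleftrightarrow> spanning_hyperforest n F \<and> card (hcomponents n F) = 1"

definition rooted_hyperforests :: "nat \<Rightarrow> (nat set set \<times> nat set) set" where
  "rooted_hyperforests n = {(F, R). spanning_hyperforest n F \<and> R \<subseteq> {1..n} \<and>
      (\<forall>C \<in> hcomponents n F. card (R \<inter> C) = 1)}"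

definition bell_poly :: "nat \<Rightarrow> 'a::comm_semiring_1 \<Rightarrow> 'a" where
  "bell_poly s x = (\<Sum>l\<le>s. of_nat (Stirling s l) * x ^ l)"

end

theory Submission
  imports Defs "HOL-Computational_Algebra.Formal_Power_Series" "HOL-Library.Disjoint_Sets"
begin

(* Let t(V,R) count the acyclic hyperedge sets on a finite vertex set V in which every component
   contains exactly one root of R.  Deleting a root rho from the hyperedges through it leaves a
   set partition P of some non-roots S and a forest on V - {rho} rooted at (R - {rho}) Un S, and
   this decomposition is bijective.  So t depends only on n = |V|, r = |R|, and satisfies
       t(n+1, r) = Sum_s C(n+1-r, s) * b_s(1) * t(n, r-1+s),
   b_s(1) being the number of partitions of an s-set.  The exponential generating function
   exp (x (e^y - 1)) of the Bell polynomials b_m(x), characterised by a linear differential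
   equation, shows that n * t(n,r) = r * b_{n-r}(n) solves this recursion.  Summing over the
   C(n,r) root sets of size r, over all root sets, and dividing the one-component count by the
   n choices of root gives the three formulas of the theorem. *)

section \<open>Bell polynomials\<close>

declare Stirling.simps(4)[simp del]

text \<open>Classifying the partitions of an \<open>(m+1)\<close>-set by the block containing the last element.\<close>
lemma Stirling_Suc_Suc_sum:
  "Stirling (Suc m) (Suc l) = (\<Sum>k\<le>m. (m choose k) * Stirling k l)"
proof (induction m arbitrary: l)
  case 0
  then show ?case by (cases l) (auto simp: Stirling.simps(4))
next
  case (Suc m)
  show ?case
  proof (cases l)
    case 0
    have "(\<Sum>k\<le>Suc m. (Suc m choose k) * Stirling k 0) = 1"
      by (simp only: sum.atMost_Suc_shift) simp
    then show ?thesis using 0 by simp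
  next
    case (Suc l')
    have shift: "(\<Sum>k\<le>m. (m choose Suc k) * Stirling (Suc k) l) = (\<Sum>k\<le>m. (m choose k) * Stirling k l)"
    proof -
      have "(\<Sum>k\<le>Suc m. (m choose k) * Stirling k l) = (\<Sum>k\<le>m. (m choose Suc k) * Stirling (Suc k) l)"
        using Suc by (simp only: sum.atMost_Suc_shift) simp
      moreover have "(\<Sum>k\<le>Suc m. (m choose k) * Stirling k l) = (\<Sum>k\<le>m. (m choose k) * Stirling k l)"
        by simp
      ultimately show ?thesis by simp
    qed
    have recur: "(\<Sum>k\<le>m. (m choose k) * Stirling (Suc k) l)
        = l * (\<Sum>k\<le>m. (m choose k) * Stirling k l) + (\<Sum>k\<le>m. (m choose k) * Stirling k l')"
      using Suc by (simp add: Stirling.simps(4) sum_distrib_left sum.distrib algebra_simps)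
    have "(\<Sum>k\<le>Suc m. (Suc m choose k) * Stirling k l)
        = (\<Sum>k\<le>m. (Suc m choose Suc k) * Stirling (Suc k) l)"
      using Suc by (simp only: sum.atMost_Suc_shift) simp
    also have "\<dots> = (\<Sum>k\<le>m. (m choose k) * Stirling (Suc k) l)
        + (\<Sum>k\<le>m. (m choose Suc k) * Stirling (Suc k) l)"
      by (simp add: sum.distrib algebra_simps)
    finally have pascal: "(\<Sum>k\<le>Suc m. (Suc m choose k) * Stirling k l)
        = (\<Sum>k\<le>m. (m choose k) * Stirling (Suc k) l) + (\<Sum>k\<le>m. (m choose Suc k) * Stirling (Suc k) l)" .
    have "Stirling (Suc (Suc m)) (Suc l) = Suc l * Stirling (Suc m) (Suc l) + Stirling (Suc m) (Suc l')"
      using Suc by (simp add: Stirling.simps(4))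
    then show ?thesis unfolding pascal recur shift Suc.IH[of l] Suc.IH[of l'] by simp
  qed
qed

lemma sum_choose_reflect:
  fixes f :: "nat \<Rightarrow> 'a::comm_semiring_1"
  shows "(\<Sum>k\<le>m. of_nat (m choose k) * f k) = (\<Sum>k\<le>m. of_nat (m choose k) * f (m - k))"
proof -
  have "(\<Sum>k\<le>m. of_nat (m choose k) * f k) = (\<Sum>k\<le>m. of_nat (m choose (m - k)) * f (m - k))"
    by (rule sum.reindex_bij_witness[of _ "\<lambda>k. m - k" "\<lambda>k. m - k"]) auto
  also have "\<dots> = (\<Sum>k\<le>m. of_nat (m choose k) * f (m - k))"
    by (intro sum.cong refl) (simp add: binomial_symmetric[symmetric])
  finally show ?thesis .
qed

lemma bell_poly_Suc:
  fixes x :: "'a::comm_semiring_1"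
  shows "bell_poly (Suc m) x = x * (\<Sum>k\<le>m. of_nat (m choose k) * bell_poly k x)"
proof -
  have trunc: "(\<Sum>l\<le>m. of_nat (Stirling k l) * x ^ l) = bell_poly k x" if "k \<le> m" for k
  proof -
    have "(\<Sum>l\<le>m. of_nat (Stirling k l) * x ^ l) = (\<Sum>l\<le>k. of_nat (Stirling k l) * x ^ l)"
      by (rule sum.mono_neutral_right) (use that in auto)
    then show ?thesis by (simp add: bell_poly_def)
  qed
  have "bell_poly (Suc m) x = (\<Sum>l\<le>m. of_nat (Stirling (Suc m) (Suc l)) * x ^ Suc l)"
    unfolding bell_poly_def by (simp only: sum.atMost_Suc_shift) simp
  also have "\<dots> = x * (\<Sum>l\<le>m. \<Sum>k\<le>m. of_nat (m choose k) * (of_nat (Stirling k l) * x ^ l))"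
    by (simp only: Stirling_Suc_Suc_sum of_nat_sum of_nat_mult sum_distrib_right sum_distrib_left)
       (simp add: mult_ac)
  also have "\<dots> = x * (\<Sum>k\<le>m. \<Sum>l\<le>m. of_nat (m choose k) * (of_nat (Stirling k l) * x ^ l))"
    by (subst sum.swap) (rule refl)
  also have "\<dots> = x * (\<Sum>k\<le>m. of_nat (m choose k) * bell_poly k x)"
    by (simp add: trunc sum_distrib_left[symmetric])
  finally show ?thesis .
qed

lemma of_nat_bell_poly: "(of_nat (bell_poly s n) :: 'a::comm_semiring_1) = bell_poly s (of_nat n)"
  by (simp add: bell_poly_def)

section \<open>The exponential generating function of the Bell polynomials\<close>

unbundle fps_syntax

text \<open>\<open>\<Sum>\<^sub>m b\<^sub>m(x) y\<^sup>m/m!\<close>, i.e. \<open>exp (x (e\<^sup>y - 1))\<close>, as a formal power series in \<open>y\<close>.\<close>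
definition bell_egf :: "real \<Rightarrow> real fps" where
  "bell_egf x = Abs_fps (\<lambda>m. bell_poly m x / fact m)"

lemma bell_egf_nth: "bell_egf x $ m = bell_poly m x / fact m"
  by (simp add: bell_egf_def)

text \<open>Touchard's recursion says that the series solves \<open>B' = x e\<^sup>y B\<close>.\<close>
lemma bell_egf_deriv: "fps_deriv (bell_egf x) = fps_const x * fps_exp 1 * bell_egf x"
proof (rule fps_ext)
  fix n
  have "fps_deriv (bell_egf x) $ n = bell_poly (Suc n) x / fact n"
    by (simp add: bell_egf_nth fps_deriv_nth field_simps del: of_nat_Suc)
  also have "\<dots> = x * (\<Sum>i\<le>n. of_nat (n choose i) * bell_poly (n - i) x) / fact n"
    by (simp add: bell_poly_Suc sum_choose_reflect[of n "\<lambda>k. bell_poly k x"])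
  also have "\<dots> = x * (\<Sum>i\<le>n. (1 / fact i) * (bell_poly (n - i) x / fact (n - i)))"
    by (simp add: sum_divide_distrib binomial_fact sum_distrib_left field_simps)
  also have "\<dots> = (fps_const x * fps_exp 1 * bell_egf x) $ n"
    unfolding mult.assoc fps_mult_left_const_nth by (simp add: fps_mult_nth bell_egf_nth atLeast0AtMost)
  finally show "fps_deriv (bell_egf x) $ n = (fps_const x * fps_exp 1 * bell_egf x) $ n" .
qed

lemma fps_linear_ode_unique:
  fixes f h g :: "'a::{field, ring_char_0} fps"
  assumes "fps_deriv f = g * f" "fps_deriv h = g * h" "f $ 0 = h $ 0"
  shows "f = h"
proof -
  have "\<forall>k\<le>n. f $ k = h $ k" for n
  proof (induction n)
    case 0 then show ?case using assms(3) by simp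
  next
    case (Suc n)
    have "(g * f) $ n = (g * h) $ n"
      using Suc by (auto simp: fps_mult_nth intro!: sum.cong)
    then have "fps_deriv f $ n = fps_deriv h $ n" using assms by simp
    then have "f $ Suc n = h $ Suc n"
      by (simp add: fps_deriv_nth del: of_nat_Suc)
    then show ?case using Suc by (auto simp: le_Suc_eq)
  qed
  then show ?thesis by (intro fps_ext) blast
qed

text \<open>The exponential law \<open>B\<^sub>x\<^sub>+\<^sub>y = B\<^sub>x B\<^sub>y\<close>: both sides solve the same differential equation.\<close>
lemma bell_egf_add: "bell_egf (x + y) = bell_egf x * bell_egf y"
proof (rule fps_linear_ode_unique[where g = "fps_const (x + y) * fps_exp 1"])
  show "fps_deriv (bell_egf (x + y)) = fps_const (x + y) * fps_exp 1 * bell_egf (x + y)"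
    by (rule bell_egf_deriv)
  show "fps_deriv (bell_egf x * bell_egf y) = fps_const (x + y) * fps_exp 1 * (bell_egf x * bell_egf y)"
    by (simp add: fps_deriv_mult bell_egf_deriv fps_const_add[symmetric] algebra_simps del: fps_const_add)
  show "bell_egf (x + y) $ 0 = (bell_egf x * bell_egf y) $ 0"
    by (simp add: bell_egf_nth bell_poly_def)
qed

lemma bell_poly_add:
  "bell_poly m (x + y) = (\<Sum>s\<le>m. of_nat (m choose s) * bell_poly s x * bell_poly (m - s) (y::real))"
proof -
  have "bell_poly m (x + y) / fact m
      = (\<Sum>s\<le>m. bell_poly s x / fact s * (bell_poly (m - s) y / fact (m - s)))"
    using arg_cong[OF bell_egf_add, of "\<lambda>f. f $ m" x y]
    by (simp add: bell_egf_nth fps_mult_nth atLeast0AtMost)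
  then have "bell_poly m (x + y) = fact m * (\<Sum>s\<le>m. bell_poly s x / fact s * (bell_poly (m - s) y / fact (m - s)))"
    by (simp add: field_simps)
  also have "\<dots> = (\<Sum>s\<le>m. of_nat (m choose s) * bell_poly s x * bell_poly (m - s) y)"
    by (simp add: sum_distrib_left binomial_fact field_simps)
  finally show ?thesis .
qed

text \<open>A weighted variant, read off from \<open>(x+1) B\<^sub>1 y B\<^sub>x' = x y B\<^sub>x\<^sub>+\<^sub>1'\<close>.\<close>
lemma bell_poly_add_weighted:
  "(x + 1) * (\<Sum>s\<le>m. of_nat (m choose s) * bell_poly s 1 * (of_nat (m - s) * bell_poly (m - s) x))
     = x * of_nat m * bell_poly m (x + 1 :: real)"
proof -
  have shifted: "fps_X * fps_deriv (bell_egf z) = Abs_fps (\<lambda>k. of_nat k * bell_poly k z / fact k)" for z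
    by (simp add: fps_mult_fps_X_deriv_shift bell_egf_nth)
  have "fps_const (x + 1) * (bell_egf 1 * (fps_X * fps_deriv (bell_egf x)))
      = fps_const x * (fps_X * fps_deriv (bell_egf (x + 1)))"
    by (simp add: bell_egf_deriv bell_egf_add fps_const_add[symmetric] algebra_simps del: fps_const_add)
  then have "(fps_const (x + 1) * (bell_egf 1 * (fps_X * fps_deriv (bell_egf x)))) $ m
      = (fps_const x * (fps_X * fps_deriv (bell_egf (x + 1)))) $ m"
    by (rule arg_cong)
  then have "(x + 1) * (bell_egf 1 * Abs_fps (\<lambda>k. of_nat k * bell_poly k x / fact k)) $ m
      = x * (Abs_fps (\<lambda>k. of_nat k * bell_poly k (x + 1) / fact k)) $ m"
    by (simp only: fps_mult_left_const_nth shifted)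
  then have "(x + 1) * (\<Sum>s\<le>m. bell_poly s 1 / fact s * (of_nat (m - s) * bell_poly (m - s) x / fact (m - s)))
      = x * (of_nat m * bell_poly m (x + 1) / fact m)"
    by (simp add: fps_mult_nth bell_egf_nth atLeast0AtMost)
  then have "fact m * ((x + 1) * (\<Sum>s\<le>m. bell_poly s 1 / fact s * (of_nat (m - s) * bell_poly (m - s) x / fact (m - s))))
      = x * of_nat m * bell_poly m (x + 1)"
    by (simp add: field_simps)
  moreover have "fact m * ((x + 1) * (\<Sum>s\<le>m. bell_poly s 1 / fact s * (of_nat (m - s) * bell_poly (m - s) x / fact (m - s))))
     = (x + 1) * (\<Sum>s\<le>m. of_nat (m choose s) * bell_poly s 1 * (of_nat (m - s) * bell_poly (m - s) x))"
    by (simp add: sum_distrib_left binomial_fact field_simps)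
  ultimately show ?thesis by simp
qed

section \<open>Counting set partitions\<close>

lemma sum_Pow_by_card:
  fixes h :: "nat \<Rightarrow> 'a::comm_semiring_1"
  assumes "finite M"
  shows "(\<Sum>T\<in>Pow M. h (card T)) = (\<Sum>k\<le>card M. of_nat (card M choose k) * h k)"
proof -
  have sub: "card ` Pow M \<subseteq> {..card M}" using assms by (auto intro: card_mono)
  have "(\<Sum>T\<in>Pow M. h (card T)) = (\<Sum>k\<le>card M. \<Sum>T\<in>{T \<in> Pow M. card T = k}. h (card T))"
    using sum.group[OF finite_Pow_iff[THEN iffD2, OF assms] finite_atMost sub, of "\<lambda>T. h (card T)"]
    by simp
  also have "\<dots> = (\<Sum>k\<le>card M. of_nat (card M choose k) * h k)"
  proof (rule sum.cong[OF refl])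
    fix k
    have "(\<Sum>T\<in>{T \<in> Pow M. card T = k}. h (card T)) = of_nat (card {T \<in> Pow M. card T = k}) * h k"
      by simp
    also have "{T \<in> Pow M. card T = k} = {T. T \<subseteq> M \<and> card T = k}" by auto
    finally show "(\<Sum>T\<in>{T \<in> Pow M. card T = k}. h (card T)) = of_nat (card M choose k) * h k"
      using n_subsets[OF assms, of k] by simp
  qed
  finally show ?thesis .
qed

lemma partitions_insert:
  assumes xS: "x \<notin> S"
  shows "{P. partition_on (insert x S) P} =
    (\<lambda>(T, Q). insert (insert x T) Q) ` (SIGMA T:Pow S. {Q. partition_on (S - T) Q})"
    (is "?L = ?g ` ?D")
proof (intro equalityI subsetI)
  fix P assume "P \<in> ?L"
  then have P: "partition_on (insert x S) P" by simp
  then obtain p where p: "p \<in> P" "x \<in> p" by (auto simp: partition_on_def)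
  have disj: "disjnt p (\<Union>(P - {p}))"
    using P p unfolding partition_on_def pairwise_def disjnt_def by blast
  have PP: "P = insert p (P - {p})" using p by auto
  have "partition_on (insert x S - p) (P - {p})"
    using P partition_on_insert[OF disj, of "insert x S"] PP by simp
  moreover have "insert x S - p = S - (p - {x})" using p xS by auto
  moreover have "p - {x} \<subseteq> S" using P p by (auto simp: partition_on_def)
  moreover have "insert x (p - {x}) = p" using p by auto
  ultimately have "(p - {x}, P - {p}) \<in> ?D" "?g (p - {x}, P - {p}) = P"
    using PP by auto
  then show "P \<in> ?g ` ?D" by (metis image_eqI)
next
  fix P assume "P \<in> ?g ` ?D"
  then obtain T Q where TQ: "T \<subseteq> S" "partition_on (S - T) Q" "P = insert (insert x T) Q" by auto
  have d: "disjnt (insert x T) (\<Union>Q)" using TQ xS by (auto simp: partition_on_def disjnt_def)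
  have "insert x S - insert x T = S - T" using xS by auto
  then have "partition_on (insert x S - insert x T) Q" using TQ(2) by simp
  then have "partition_on (insert x S) (insert (insert x T) Q)"
    using partition_on_insert[OF d, of "insert x S"] TQ(1) by blast
  then show "P \<in> ?L" using TQ by simp
qed

lemma partitions_insert_inj:
  assumes xS: "x \<notin> S"
  shows "inj_on (\<lambda>(T, Q). insert (insert x T) Q) (SIGMA T:Pow S. {Q. partition_on (S - T) Q})"
proof (rule inj_onI, clarsimp)
  fix T1 Q1 T2 Q2
  assume h1: "T1 \<subseteq> S" "partition_on (S - T1) Q1" and h2: "T2 \<subseteq> S" "partition_on (S - T2) Q2"
    and E: "insert (insert x T1) Q1 = insert (insert x T2) Q2"
  have n1: "\<forall>q\<in>Q1. x \<notin> q" and n2: "\<forall>q\<in>Q2. x \<notin> q"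
    using h1 h2 xS by (auto simp: partition_on_def)
  have "insert x T1 \<in> insert (insert x T2) Q2" using E by blast
  then have "insert x T1 = insert x T2" using n2 by auto
  moreover have "x \<notin> T1" "x \<notin> T2" using h1(1) h2(1) xS by auto
  ultimately have T: "T1 = T2" by (metis Diff_insert_absorb)
  have "Q1 = insert (insert x T1) Q1 - {insert x T1}" using n1 by auto
  also have "\<dots> = insert (insert x T2) Q2 - {insert x T2}" using E T by simp
  also have "\<dots> = Q2" using n2 by auto
  finally show "T1 = T2 \<and> Q1 = Q2" using T by simp
qed

lemma card_partitions:
  "finite S \<Longrightarrow> card {P. partition_on S P} = bell_poly (card S) (1::nat)"
proof (induction "card S" arbitrary: S rule: less_induct)
  case less
  show ?case
  proof (cases "S = {}")
    case True
    have "{P. partition_on S P} = {{}}" using True partition_on_empty by auto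
    then show ?thesis using True by (simp add: bell_poly_def)
  next
    case False
    then obtain x S0 where S: "S = insert x S0" and xS0: "x \<notin> S0"
      by (metis Set.set_insert ex_in_conv)
    have fin0: "finite S0" using less.prems S by simp
    have cS: "card S = Suc (card S0)" using S xS0 fin0 by simp
    have "card {P. partition_on S P} = card (SIGMA T:Pow S0. {Q. partition_on (S0 - T) Q})"
      unfolding S partitions_insert[OF xS0] by (rule card_image[OF partitions_insert_inj[OF xS0]])
    also have "\<dots> = (\<Sum>T\<in>Pow S0. card {Q. partition_on (S0 - T) Q})"
      by (rule card_SigmaI) (use fin0 finitely_many_partition_on in auto)
    also have "\<dots> = (\<Sum>T\<in>Pow S0. bell_poly (card S0 - card T) 1)"
    proof (rule sum.cong[OF refl])
      fix T assume T: "T \<in> Pow S0"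
      have "card (S0 - T) < card S" using cS fin0 T by (simp add: card_Diff_subset card_mono le_imp_less_Suc)
      then show "card {Q. partition_on (S0 - T) Q} = bell_poly (card S0 - card T) 1"
        using less.hyps fin0 T by (simp add: card_Diff_subset finite_subset)
    qed
    also have "\<dots> = (\<Sum>k\<le>card S0. (card S0 choose k) * bell_poly (card S0 - k) 1)"
      using sum_Pow_by_card[OF fin0, of "\<lambda>k. bell_poly (card S0 - k) (1::nat)"] by simp
    also have "\<dots> = bell_poly (card S) 1"
      using cS bell_poly_Suc[of "card S0" "1::nat"] sum_choose_reflect[of "card S0" "\<lambda>k. bell_poly k (1::nat)"]
      by simp
    finally show ?thesis .
  qed
qed

section \<open>Connectivity and cycles in hypergraphs\<close>

lemma hconn_refl [simp]: "hconn F x x"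
  unfolding hconn_def by simp

lemma hconn_edge: "e \<in> F \<Longrightarrow> x \<in> e \<Longrightarrow> y \<in> e \<Longrightarrow> hconn F x y"
  unfolding hconn_def by (rule r_into_rtranclp) blast

lemma hconn_trans: "hconn F x y \<Longrightarrow> hconn F y z \<Longrightarrow> hconn F x z"
  unfolding hconn_def by (rule rtranclp_trans)

lemma hconn_sym: "hconn F x y \<Longrightarrow> hconn F y x"
  unfolding hconn_def
proof (induction rule: rtranclp_induct)
  case (step y z)
  then show ?case by (blast intro: converse_rtranclp_into_rtranclp)
qed simp

lemma hconn_mono: "hconn F x y \<Longrightarrow> F \<subseteq> F' \<Longrightarrow> hconn F' x y"
  unfolding hconn_def
proof (induction rule: rtranclp_induct)
  case (step y z)
  then show ?case by (blast intro: rtranclp.rtrancl_into_rtrancl)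
qed simp

lemma hconn_isolated: "hconn F x y \<Longrightarrow> x \<notin> \<Union>F \<Longrightarrow> y = x"
  unfolding hconn_def by (induction rule: rtranclp_induct) auto

lemma hconn_isolated': "x \<notin> \<Union>F \<Longrightarrow> hconn F y x \<Longrightarrow> y = x"
  using hconn_isolated hconn_sym by metis

lemma hconn_chain:
  assumes "a \<le> b" and steps: "\<And>i. a \<le> i \<Longrightarrow> i < b \<Longrightarrow> hconn F (w i) (w (Suc i))"
  shows "hconn F (w a) (w b)"
  using assms(1) steps
proof (induction b rule: dec_induct)
  case (step i)
  then have "hconn F (w a) (w i)" and "hconn F (w i) (w (Suc i))" by simp_all
  then show ?case by (rule hconn_trans)
qed simp

lemma has_cycle_mono: "F \<subseteq> F' \<Longrightarrow> has_cycle F \<Longrightarrow> has_cycle F'"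
  unfolding has_cycle_def by blast

lemma no_cycle_empty: "\<not> has_cycle {}"
  unfolding has_cycle_def by auto

lemma two_cycle:
  assumes "e1 \<in> F" "e2 \<in> F" "e1 \<noteq> e2" "a \<noteq> b" "a \<in> e1" "b \<in> e1" "a \<in> e2" "b \<in> e2"
  shows "has_cycle F"
  unfolding has_cycle_def
proof (intro exI[of _ "[a, b]"] exI[of _ "[e1, e2]"] conjI allI impI)
  fix i assume "i < length [a, b]"
  then have "i = 0 \<or> i = 1" by auto
  then show "[a, b] ! i \<in> [e1, e2] ! i" "[a, b] ! (Suc i mod length [a, b]) \<in> [e1, e2] ! i"
    using assms by auto
qed (use assms in auto)

definition hpath :: "nat set set \<Rightarrow> nat list \<Rightarrow> nat set list \<Rightarrow> bool" where
  "hpath F vs es \<longleftrightarrow> length vs = Suc (length es) \<and> distinct vs \<and> distinct es \<and> set es \<subseteq> F \<and>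
     (\<forall>i<length es. vs ! i \<in> es ! i \<and> vs ! Suc i \<in> es ! i)"

lemma hpath_take:
  assumes "hpath F vs es" "i < length vs"
  shows "hpath F (take (Suc i) vs) (take i es)"
  using assms unfolding hpath_def by (auto dest: in_set_takeD)

lemma hpath_snoc:
  assumes "hpath F vs es" "z \<notin> set vs" "f \<notin> set es" "f \<in> F" "vs ! length es \<in> f" "z \<in> f"
  shows "hpath F (vs @ [z]) (es @ [f])"
  using assms unfolding hpath_def by (auto simp: nth_append less_Suc_eq)

text \<open>Connected vertices are joined by a path: extend a path by a hyperedge, cutting it short
  when the new vertex or the new hyperedge already occurs on it.\<close>
lemma hconn_imp_hpath:
  assumes "hconn F u v"
  shows "\<exists>vs es. hpath F vs es \<and> vs ! 0 = u \<and> vs ! length es = v"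
  using assms unfolding hconn_def
proof (induction rule: rtranclp_induct)
  case base
  show ?case by (intro exI[of _ "[u]"] exI[of _ "[]"]) (simp add: hpath_def)
next
  case (step y z)
  from step.IH obtain vs es where W: "hpath F vs es" "vs ! 0 = u" "vs ! length es = y"
    by blast
  from step.hyps(2) obtain f where f: "f \<in> F" "y \<in> f" "z \<in> f" by blast
  have len: "length vs = Suc (length es)" using W(1) by (simp add: hpath_def)
  show ?case
  proof (cases "z \<in> set vs")
    case True
    then obtain i where i: "i < length vs" "vs ! i = z" by (auto simp: in_set_conv_nth)
    show ?thesis
      by (rule exI[of _ "take (Suc i) vs"], rule exI[of _ "take i es"])
         (use hpath_take[OF W(1) i(1)] W(2) i len in auto)
  next
    case z_new: False
    obtain i where i: "i \<le> length es" "f \<notin> set (take i es)" "vs ! i \<in> f"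
    proof (cases "f \<in> set es")
      case True
      then obtain i where "i < length es" "es ! i = f" by (auto simp: in_set_conv_nth)
      moreover have "distinct es" using W(1) by (simp add: hpath_def)
      ultimately have "f \<notin> set (take i es)"
        by (metis distinct_take take_Suc_conv_app_nth distinct_append not_distinct_conv_prefix)
      then show ?thesis using that[of i] W(1) \<open>i < length es\<close> \<open>es ! i = f\<close> unfolding hpath_def by auto
    next
      case False
      then show ?thesis using that[of "length es"] W(3) f(2) by simp
    qed
    have "hpath F (take (Suc i) vs @ [z]) (take i es @ [f])"
      by (rule hpath_snoc[OF hpath_take[OF W(1)]]) (use i z_new f len in \<open>auto dest: in_set_takeD\<close>)
    then show ?thesis using W(2) i len
      by (intro exI[of _ "take (Suc i) vs @ [z]"] exI[of _ "take i es @ [f]"] conjI) (auto simp: nth_append)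
  qed
qed

lemma hpath_close_cycle:
  assumes W: "hpath F vs es" and e: "e \<notin> F" and a: "vs ! 0 \<in> e" and b: "vs ! length es \<in> e"
    and ne: "vs ! 0 \<noteq> vs ! length es"
  shows "has_cycle (insert e F)"
  unfolding has_cycle_def
proof (intro exI[of _ vs] exI[of _ "es @ [e]"] conjI allI impI)
  have len: "length vs = Suc (length es)" using W by (simp add: hpath_def)
  then show "2 \<le> length vs" "length (es @ [e]) = length vs" using ne by (auto intro: Suc_leI)
  show "distinct vs" "distinct (es @ [e])" "set (es @ [e]) \<subseteq> insert e F"
    using W e by (auto simp: hpath_def)
  fix i assume i: "i < length vs"
  show "vs ! i \<in> (es @ [e]) ! i" "vs ! (Suc i mod length vs) \<in> (es @ [e]) ! i"
    using i len W a b unfolding hpath_def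
    by (cases "i = length es"; simp add: nth_append)+
qed

lemma forest_insert_not_conn:
  assumes "\<not> has_cycle (insert e F)" "e \<notin> F" "u \<in> e" "v \<in> e" "u \<noteq> v"
  shows "\<not> hconn F u v"
  using hconn_imp_hpath hpath_close_cycle assms by metis

text \<open>Conversely, a cycle created by a new hyperedge \<open>e\<close> connects two of its vertices:
  the rest of the cycle runs from the vertex after \<open>e\<close> round to the vertex before it.\<close>
lemma cycle_insert_conn:
  assumes nc: "\<not> has_cycle F" and c: "has_cycle (insert e F)"
  shows "\<exists>u\<in>e. \<exists>v\<in>e. u \<noteq> v \<and> hconn F u v"
proof -
  from c obtain vs es where l2: "2 \<le> length vs" and le: "length es = length vs"
    and dv: "distinct vs" and de: "distinct es" and sub: "set es \<subseteq> insert e F"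
    and C: "\<forall>i < length vs. vs ! i \<in> es ! i \<and> vs ! (Suc i mod length vs) \<in> es ! i"
    unfolding has_cycle_def by blast
  define l where "l = length vs"
  define w where "w i = vs ! (i mod l)" for i
  have "e \<in> set es"
  proof (rule ccontr)
    assume "e \<notin> set es"
    then have "set es \<subseteq> F" using sub by auto
    then have "has_cycle F" unfolding has_cycle_def using l2 le dv de C by blast
    then show False using nc by simp
  qed
  then obtain j where j: "j < l" "es ! j = e" using le unfolding l_def by (auto simp: in_set_conv_nth)
  have steps: "hconn F (w i) (w (Suc i))" if "i < l" "i \<noteq> j" for i
  proof (rule hconn_edge)
    have "es ! i \<noteq> es ! j" using de that j le unfolding l_def by (metis nth_eq_iff_index_eq)
    then show "es ! i \<in> F" using sub that j le unfolding l_def by (auto simp: set_conv_nth)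
    show "w i \<in> es ! i" "w (Suc i) \<in> es ! i" using C that unfolding w_def l_def by simp_all
  qed
  have "hconn F (w (Suc j)) (w l)" by (rule hconn_chain) (use j steps in auto)
  moreover have "hconn F (w 0) (w j)" by (rule hconn_chain) (use j steps in auto)
  moreover have "w l = w 0" unfolding w_def by simp
  ultimately have "hconn F (w j) (w (Suc j))" using hconn_trans hconn_sym by metis
  moreover have "j \<noteq> Suc j mod l" using j l2 unfolding l_def by (cases "Suc j = length vs") auto
  then have "w j \<noteq> w (Suc j)"
    using dv j unfolding w_def l_def by (subst nth_eq_iff_index_eq) (auto intro: mod_less_divisor)
  moreover have "w j \<in> e" "w (Suc j) \<in> e" using C j unfolding w_def l_def by auto
  ultimately show ?thesis by blast
qed

section \<open>Rooted forests on a finite vertex set\<close>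

definition edges_on :: "nat set \<Rightarrow> nat set set" where
  "edges_on V = {e. e \<subseteq> V \<and> 2 \<le> card e}"

definition rooted_forests :: "nat set \<Rightarrow> nat set \<Rightarrow> nat set set set" where
  "rooted_forests V R = {F. F \<subseteq> edges_on V \<and> \<not> has_cycle F \<and>
      (\<forall>u\<in>V. card (R \<inter> {v\<in>V. hconn F u v}) = 1)}"

lemma rooted_forestsD:
  assumes "F \<in> rooted_forests V R"
  shows "F \<subseteq> edges_on V" "\<not> has_cycle F" "\<And>u. u \<in> V \<Longrightarrow> card (R \<inter> {v\<in>V. hconn F u v}) = 1"
  using assms unfolding rooted_forests_def by auto

lemma finite_rooted_forests: "finite V \<Longrightarrow> finite (rooted_forests V R)"
  unfolding rooted_forests_def edges_on_def by (rule finite_subset[of _ "Pow (Pow V)"]) auto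

lemma card_1_eq: "card A = 1 \<Longrightarrow> a \<in> A \<Longrightarrow> b \<in> A \<Longrightarrow> a = b"
  by (metis card_1_singletonE singletonD)

lemma rooted_forest_roots_unconnected:
  assumes "F \<in> rooted_forests V R" "r1 \<in> R" "r2 \<in> R" "R \<subseteq> V" "hconn F r1 r2"
  shows "r1 = r2"
proof -
  have "card (R \<inter> {v\<in>V. hconn F r1 v}) = 1" using rooted_forestsD(3)[OF assms(1)] assms(2,4) by auto
  then show ?thesis using assms(2-5) by (auto intro: card_1_eq)
qed

definition attach_root :: "nat \<Rightarrow> nat set set \<Rightarrow> nat set set \<Rightarrow> nat set set" where
  "attach_root \<rho> P F' = F' \<union> insert \<rho> ` P"

text \<open>The component of \<open>\<rho>\<close> in \<open>attach_root \<rho> P F'\<close>: \<open>\<rho>\<close> and everything \<open>F'\<close>-connected to a block.\<close>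
definition root_closure :: "nat set set \<Rightarrow> nat \<Rightarrow> nat set set \<Rightarrow> nat set" where
  "root_closure F' \<rho> P = insert \<rho> {y. \<exists>s\<in>\<Union>P. hconn F' s y}"

lemma root_closure_root: "\<rho> \<in> root_closure F' \<rho> P"
  unfolding root_closure_def by blast

lemma root_closure_block: "s \<in> \<Union>P \<Longrightarrow> s \<in> root_closure F' \<rho> P"
  unfolding root_closure_def using hconn_refl by blast

lemma root_closure_closed:
  assumes "\<rho> \<notin> \<Union>F'" "y \<in> root_closure F' \<rho> P" "hconn F' y z \<or> hconn F' z y"
  shows "z \<in> root_closure F' \<rho> P"
proof (cases "y = \<rho>")
  case True
  then show ?thesis using assms hconn_isolated hconn_isolated' by (metis root_closure_root)
next
  case False
  then obtain s where "s \<in> \<Union>P" "hconn F' s y" using assms(2) by (auto simp: root_closure_def)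
  then show ?thesis using assms(3) hconn_trans hconn_sym unfolding root_closure_def by blast
qed

lemma hconn_attach_rootD:
  assumes iso: "\<rho> \<notin> \<Union>F'" and conn: "hconn (attach_root \<rho> P F') x y"
  shows "hconn F' x y \<or> (x \<in> root_closure F' \<rho> P \<and> y \<in> root_closure F' \<rho> P)"
    (is "_ \<or> (x \<in> ?K \<and> y \<in> ?K)")
  using conn unfolding hconn_def[of "attach_root \<rho> P F'"]
proof (induction rule: rtranclp_induct)
  case (step y z)
  from step.hyps(2) obtain f where f: "f \<in> attach_root \<rho> P F'" "y \<in> f" "z \<in> f" by blast
  show ?case
  proof (cases "f \<in> F'")
    case True
    then have yz: "hconn F' y z" using f hconn_edge by blast
    from step.IH show ?thesis
    proof
      assume "hconn F' x y"
      then show ?thesis using yz hconn_trans by blast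
    qed (use root_closure_closed[OF iso _ disjI1[OF yz]] in blast)
  next
    case False
    then obtain B where "B \<in> P" "f = insert \<rho> B" using f(1) by (auto simp: attach_root_def)
    then have "y \<in> ?K" "z \<in> ?K" using f(2,3) root_closure_root[of \<rho> F' P] root_closure_block[of _ P F' \<rho>]
      by auto
    moreover have "x \<in> ?K" using step.IH root_closure_closed[OF iso \<open>y \<in> ?K\<close>] by blast
    ultimately show ?thesis by blast
  qed
qed simp

lemma hconn_attach_root:
  assumes iso: "\<rho> \<notin> \<Union>F'"
  shows "hconn (attach_root \<rho> P F') x y \<longleftrightarrow>
    hconn F' x y \<or> (x \<in> root_closure F' \<rho> P \<and> y \<in> root_closure F' \<rho> P)"
    (is "hconn ?F x y \<longleftrightarrow> _ \<or> (x \<in> ?K \<and> y \<in> ?K)")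
proof
  show "hconn ?F x y \<Longrightarrow> hconn F' x y \<or> (x \<in> ?K \<and> y \<in> ?K)"
    by (rule hconn_attach_rootD[OF iso])
next
  have root_to: "hconn ?F \<rho> k" if k: "k \<in> ?K" for k
  proof (cases "k = \<rho>")
    case False
    then obtain s B where sB: "B \<in> P" "s \<in> B" "hconn F' s k" using k by (auto simp: root_closure_def)
    have "hconn ?F \<rho> s" using sB by (intro hconn_edge[of "insert \<rho> B"]) (auto simp: attach_root_def)
    moreover have "hconn ?F s k" using sB(3) by (rule hconn_mono) (auto simp: attach_root_def)
    ultimately show ?thesis using hconn_trans by blast
  qed simp
  assume "hconn F' x y \<or> (x \<in> ?K \<and> y \<in> ?K)"
  then show "hconn ?F x y"
  proof
    assume "hconn F' x y"
    then show ?thesis by (rule hconn_mono) (auto simp: attach_root_def)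
  next
    assume "x \<in> ?K \<and> y \<in> ?K"
    then have "hconn ?F x \<rho>" "hconn ?F \<rho> y" using root_to hconn_sym by blast+
    then show ?thesis by (rule hconn_trans)
  qed
qed

lemma roots_outside_root_closure:
  assumes iso: "\<rho> \<notin> \<Union>F'" and u: "u \<notin> root_closure F' \<rho> P"
  shows "R \<inter> {v\<in>V. hconn (attach_root \<rho> P F') u v} = ((R - {\<rho>}) \<union> \<Union>P) \<inter> {v\<in>V - {\<rho>}. hconn F' u v}"
proof -
  have "u \<noteq> \<rho>" using u root_closure_root by metis
  then have comp: "{v\<in>V. hconn (attach_root \<rho> P F') u v} = {v\<in>V - {\<rho>}. hconn F' u v}"
    using hconn_attach_root[OF iso] u hconn_isolated'[OF iso] by auto
  have "v \<notin> \<Union>P" if "hconn F' u v" for v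
    using that u root_closure_block root_closure_closed[OF iso] by blast
  then show ?thesis unfolding comp by auto
qed

lemma attach_root_new_block_unconnected:
  assumes iso: "\<rho> \<notin> \<Union>F'" and root: "\<rho> \<notin> B" and disj: "\<And>B'. B' \<in> P \<Longrightarrow> disjnt B B'"
    and unconn: "\<And>s1 s2. s1 \<in> \<Union>(insert B P) \<Longrightarrow> s2 \<in> \<Union>(insert B P) \<Longrightarrow> hconn F' s1 s2 \<Longrightarrow> s1 = s2"
    and uv: "u \<in> insert \<rho> B" "v \<in> insert \<rho> B" "u \<noteq> v"
  shows "\<not> hconn (attach_root \<rho> P F') u v"
proof
  assume "hconn (attach_root \<rho> P F') u v"
  then have "hconn F' u v \<or> (u \<in> root_closure F' \<rho> P \<and> v \<in> root_closure F' \<rho> P)"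
    by (rule hconn_attach_rootD[OF iso])
  then show False
  proof
    assume conn: "hconn F' u v"
    have "u \<noteq> \<rho>" using hconn_isolated[OF conn] iso uv(3) by blast
    moreover have "v \<noteq> \<rho>" using hconn_isolated'[OF _ conn] iso uv(3) by blast
    ultimately have "u \<in> \<Union>(insert B P)" "v \<in> \<Union>(insert B P)" using uv(1,2) by auto
    then show False using unconn[OF _ _ conn] uv(3) by blast
  next
    obtain w where w: "w \<in> B" "w \<in> {u, v}" using uv by auto
    assume "u \<in> root_closure F' \<rho> P \<and> v \<in> root_closure F' \<rho> P"
    then have "w \<in> root_closure F' \<rho> P" using w(2) by blast
    moreover have "w \<noteq> \<rho>" using w(1) root by auto
    ultimately obtain s where s: "s \<in> \<Union>P" "hconn F' s w" by (auto simp: root_closure_def)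
    have "s = w" using unconn[OF _ _ s(2)] s(1) w(1) by blast
    then obtain B' where "B' \<in> P" "w \<in> B'" using s by blast
    then show False using disj w(1) unfolding disjnt_def by blast
  qed
qed

text \<open>Attaching \<open>\<rho>\<close> to pairwise disjoint blocks, no two of whose vertices are \<open>F'\<close>-connected,
  creates no cycle: add the blocks one at a time.\<close>
lemma attach_root_acyclic:
  assumes nc: "\<not> has_cycle F'" and iso: "\<rho> \<notin> \<Union>F'" and fin: "finite P"
  shows "disjoint P \<Longrightarrow> \<rho> \<notin> \<Union>P \<Longrightarrow>
    (\<And>s1 s2. s1 \<in> \<Union>P \<Longrightarrow> s2 \<in> \<Union>P \<Longrightarrow> hconn F' s1 s2 \<Longrightarrow> s1 = s2) \<Longrightarrow>
    \<not> has_cycle (attach_root \<rho> P F')"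
  using fin
proof (induction P rule: finite_induct)
  case empty then show ?case using nc by (simp add: attach_root_def)
next
  case (insert B P0)
  let ?F0 = "attach_root \<rho> P0 F'"
  have IH: "\<not> has_cycle ?F0"
  proof (rule insert.IH)
    show "disjoint P0" using insert.prems(1) by (simp add: pairwise_insert)
    show "\<rho> \<notin> \<Union>P0" using insert.prems(2) by simp
    show "s1 = s2" if "s1 \<in> \<Union>P0" "s2 \<in> \<Union>P0" "hconn F' s1 s2" for s1 s2
      using insert.prems(3)[of s1 s2] that by blast
  qed
  have disj: "disjnt B B'" if B': "B' \<in> P0" for B'
  proof -
    have "B' \<noteq> B" using insert.hyps(2) B' by blast
    then show ?thesis using insert.prems(1) B' by (simp add: pairwise_insert)
  qed
  have root: "\<rho> \<notin> B" using insert.prems(2) by simp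
  have "\<not> has_cycle (insert (insert \<rho> B) ?F0)"
  proof
    assume "has_cycle (insert (insert \<rho> B) ?F0)"
    then obtain u v where uv: "u \<in> insert \<rho> B" "v \<in> insert \<rho> B" "u \<noteq> v" and conn: "hconn ?F0 u v"
      using cycle_insert_conn[OF IH] by blast
    from attach_root_new_block_unconnected[OF iso root disj insert.prems(3) uv] conn show False ..
  qed
  moreover have "attach_root \<rho> (insert B P0) F' = insert (insert \<rho> B) ?F0"
    by (auto simp: attach_root_def)
  ultimately show ?case by simp
qed

lemma detach_attach_root:
  assumes "\<rho> \<notin> \<Union>F'" "\<rho> \<notin> \<Union>P"
  shows "{e \<in> attach_root \<rho> P F'. \<rho> \<notin> e} = F'"
    and "(\<lambda>e. e - {\<rho>}) ` {e \<in> attach_root \<rho> P F'. \<rho> \<in> e} = P"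
proof -
  have "{e \<in> attach_root \<rho> P F'. \<rho> \<in> e} = insert \<rho> ` P"
    using assms(1) by (auto simp: attach_root_def)
  moreover have "(\<lambda>e. e - {\<rho>}) ` insert \<rho> ` P = P"
    using assms(2) by (force simp: image_image)
  ultimately show "(\<lambda>e. e - {\<rho>}) ` {e \<in> attach_root \<rho> P F'. \<rho> \<in> e} = P" by simp
  show "{e \<in> attach_root \<rho> P F'. \<rho> \<notin> e} = F'"
    using assms(1) by (auto simp: attach_root_def)
qed

locale root_attachment =
  fixes V R :: "nat set" and \<rho> :: nat and S :: "nat set" and P F' :: "nat set set"
  assumes finite_V: "finite V" and R_sub: "R \<subseteq> V" and root: "\<rho> \<in> R"
    and S_sub: "S \<subseteq> V - R" and partition: "partition_on S P"
    and forest: "F' \<in> rooted_forests (V - {\<rho>}) ((R - {\<rho>}) \<union> S)"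
begin

lemma isolated: "\<rho> \<notin> \<Union>F'"
  using rooted_forestsD(1)[OF forest] unfolding edges_on_def by auto

lemma union_blocks: "\<Union>P = S"
  using partition by (simp add: partition_on_def)

lemma new_roots_unconnected:
  assumes "s1 \<in> S" "s2 \<in> S" "hconn F' s1 s2" shows "s1 = s2"
  by (rule rooted_forest_roots_unconnected[OF forest]) (use assms S_sub R_sub root in auto)

lemma edges: "attach_root \<rho> P F' \<subseteq> edges_on V"
proof
  fix e assume "e \<in> attach_root \<rho> P F'"
  then consider "e \<in> F'" | B where "B \<in> P" "e = insert \<rho> B" by (auto simp: attach_root_def)
  then show "e \<in> edges_on V"
  proof cases
    case 1 then show ?thesis using rooted_forestsD(1)[OF forest] unfolding edges_on_def by auto
  next
    case (2 B)
    have B: "B \<subseteq> S" "B \<noteq> {}" using 2 partition union_blocks by (auto simp: partition_on_def)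
    moreover have "finite B" using B(1) S_sub finite_V by (meson Diff_subset finite_subset)
    moreover have "\<rho> \<notin> B" using B S_sub root by auto
    ultimately show ?thesis using 2 S_sub root R_sub
      by (auto simp: edges_on_def Suc_le_eq card_gt_0_iff)
  qed
qed

lemma acyclic: "\<not> has_cycle (attach_root \<rho> P F')"
proof (rule attach_root_acyclic[OF rooted_forestsD(2)[OF forest] isolated])
  have "finite S" using S_sub finite_V by (meson Diff_subset finite_subset)
  then show "finite P" using partition by (rule finite_elements)
  show "disjoint P" using partition by (simp add: partition_on_def)
  show "\<rho> \<notin> \<Union>P" using union_blocks S_sub root by auto
qed (use new_roots_unconnected union_blocks in auto)

lemma roots_in_root_closure:
  assumes u: "u \<in> root_closure F' \<rho> P"
  shows "R \<inter> {v\<in>V. hconn (attach_root \<rho> P F') u v} = {\<rho>}"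
proof -
  have "v = \<rho>" if v: "v \<in> R" "hconn (attach_root \<rho> P F') u v" for v
  proof (rule ccontr)
    assume "v \<noteq> \<rho>"
    have "v \<in> root_closure F' \<rho> P"
      using v hconn_attach_root[OF isolated] root_closure_closed[OF isolated u] by blast
    then obtain s where s: "s \<in> S" "hconn F' s v" using \<open>v \<noteq> \<rho>\<close> union_blocks by (auto simp: root_closure_def)
    have "s = v"
      using rooted_forest_roots_unconnected[OF forest _ _ _ s(2)] s(1) v(1) \<open>v \<noteq> \<rho>\<close> S_sub R_sub root
      by auto
    then show False using s S_sub v by auto
  qed
  moreover have "hconn (attach_root \<rho> P F') u \<rho>"
    using hconn_attach_root[OF isolated] u root_closure_root by blast
  ultimately show ?thesis using root R_sub by auto
qed

theorem attach_root_in_rooted_forests: "attach_root \<rho> P F' \<in> rooted_forests V R"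
proof -
  have "card (R \<inter> {v\<in>V. hconn (attach_root \<rho> P F') u v}) = 1" if u: "u \<in> V" for u
  proof (cases "u \<in> root_closure F' \<rho> P")
    case True
    then show ?thesis using roots_in_root_closure by simp
  next
    case False
    then have "u \<noteq> \<rho>" using root_closure_root by metis
    then show ?thesis
      using roots_outside_root_closure[OF isolated False] rooted_forestsD(3)[OF forest] u union_blocks by simp
  qed
  then show ?thesis using edges acyclic unfolding rooted_forests_def by blast
qed

end

locale root_detachment =
  fixes V R :: "nat set" and \<rho> :: nat and F :: "nat set set"
  assumes R_sub: "R \<subseteq> V" and root: "\<rho> \<in> R" and forest: "F \<in> rooted_forests V R"
begin

definition rest :: "nat set set" where
  "rest = {e \<in> F. \<rho> \<notin> e}"

definition blocks :: "nat set set" where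
  "blocks = (\<lambda>e. e - {\<rho>}) ` {e \<in> F. \<rho> \<in> e}"

definition new_roots :: "nat set" where
  "new_roots = \<Union>blocks"

lemma isolated: "\<rho> \<notin> \<Union>rest"
  unfolding rest_def by auto

lemma attach_detach: "attach_root \<rho> blocks rest = F"
proof -
  have "insert \<rho> ` blocks = (\<lambda>e. insert \<rho> (e - {\<rho>})) ` {e \<in> F. \<rho> \<in> e}"
    unfolding blocks_def by (simp add: image_image)
  also have "\<dots> = (\<lambda>e. e) ` {e \<in> F. \<rho> \<in> e}" by (rule image_cong) auto
  finally have "insert \<rho> ` blocks = {e \<in> F. \<rho> \<in> e}" by simp
  then show ?thesis unfolding rest_def attach_root_def by auto
qed

lemma new_root_edge:
  assumes "s \<in> new_roots" obtains e where "e \<in> F" "\<rho> \<in> e" "s \<in> e" "s \<noteq> \<rho>"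
  using assms unfolding new_roots_def blocks_def by auto

lemma new_roots_sub: "new_roots \<subseteq> V - R"
proof
  fix s assume "s \<in> new_roots"
  then obtain e where e: "e \<in> F" "\<rho> \<in> e" "s \<in> e" "s \<noteq> \<rho>" by (rule new_root_edge)
  then have "s \<in> V" using rooted_forestsD(1)[OF forest] by (auto simp: edges_on_def)
  moreover have "s \<notin> R"
  proof
    assume "s \<in> R"
    moreover have "hconn F \<rho> s" using e(1-3) by (rule hconn_edge)
    ultimately show False using rooted_forest_roots_unconnected[OF forest root _ R_sub] e(4) by blast
  qed
  ultimately show "s \<in> V - R" by simp
qed

text \<open>Two hyperedges through \<open>\<rho>\<close> meet only in \<open>\<rho>\<close>, as otherwise they would form a 2-cycle.\<close>
lemma partition: "partition_on new_roots blocks"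
proof (rule partition_onI)
  show "\<Union>blocks = new_roots" unfolding new_roots_def ..
  show "{} \<notin> blocks"
  proof
    assume "{} \<in> blocks"
    then obtain e where e: "e \<in> F" "e \<subseteq> {\<rho>}" unfolding blocks_def by auto
    then have "card e \<le> 1" using card_mono[of "{\<rho>}" e] by simp
    then show False using e rooted_forestsD(1)[OF forest] unfolding edges_on_def by auto
  qed
  fix p q assume "p \<in> blocks" "q \<in> blocks" "p \<noteq> q"
  then obtain e1 e2 where e: "e1 \<in> F" "\<rho> \<in> e1" "p = e1 - {\<rho>}" "e2 \<in> F" "\<rho> \<in> e2" "q = e2 - {\<rho>}"
    "e1 \<noteq> e2" unfolding blocks_def by auto
  show "disjnt p q"
    using two_cycle[OF e(1,4,7)] rooted_forestsD(2)[OF forest] e unfolding disjnt_def by blast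
qed

text \<open>Two new roots are not connected without \<open>\<rho>\<close>: with their hyperedges to \<open>\<rho>\<close> this would
  close a cycle.\<close>
lemma new_roots_unconnected:
  assumes s: "s \<in> new_roots" and v: "v \<in> new_roots" and conn: "hconn rest s v"
  shows "s = v"
proof (rule ccontr)
  assume sv: "s \<noteq> v"
  obtain e1 where e1: "e1 \<in> F" "\<rho> \<in> e1" "s \<in> e1" "s \<noteq> \<rho>" using s by (rule new_root_edge)
  obtain e2 where e2: "e2 \<in> F" "\<rho> \<in> e2" "v \<in> e2" "v \<noteq> \<rho>" using v by (rule new_root_edge)
  let ?F0 = "F - {e2}"
  have nc: "\<not> has_cycle (insert e2 ?F0)" using e2 rooted_forestsD(2)[OF forest] by (simp add: insert_absorb)
  have conn0: "hconn ?F0 s v" using conn by (rule hconn_mono) (use e2 in \<open>auto simp: rest_def\<close>)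
  show False
  proof (cases "s \<in> e2")
    case True
    then show False using forest_insert_not_conn[OF nc _ True e2(3) sv] conn0 by simp
  next
    case False
    then have "e1 \<in> ?F0" using e1 by auto
    then have "hconn ?F0 \<rho> s" using e1(2,3) by (rule hconn_edge)
    then have "hconn ?F0 \<rho> v" using conn0 by (rule hconn_trans)
    then show False using forest_insert_not_conn[OF nc _ e2(2) e2(3)] e2(4) by auto
  qed
qed

text \<open>Inside the old component of \<open>\<rho>\<close> every component of \<open>rest\<close> contains exactly one new root;
  elsewhere the components and their roots are unchanged.\<close>
lemma rest_roots:
  assumes u: "u \<in> V - {\<rho>}"
  shows "card (((R - {\<rho>}) \<union> new_roots) \<inter> {v\<in>V - {\<rho>}. hconn rest u v}) = 1"
proof (cases "u \<in> root_closure rest \<rho> blocks")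
  case True
  then obtain s where s: "s \<in> new_roots" "hconn rest s u"
    using u unfolding root_closure_def new_roots_def by auto
  have "v = s" if v: "v \<in> (R - {\<rho>}) \<union> new_roots" "hconn rest u v" for v
  proof -
    have sv: "hconn rest s v" using s(2) v(2) hconn_trans by blast
    show ?thesis
    proof (cases "v \<in> new_roots")
      case True then show ?thesis using new_roots_unconnected s(1) sv by auto
    next
      case False
      have "v \<in> root_closure rest \<rho> blocks"
        using root_closure_closed[OF isolated root_closure_block] s sv unfolding new_roots_def by blast
      then have "hconn F \<rho> v"
        using hconn_attach_root[OF isolated] root_closure_root attach_detach by metis
      then show ?thesis
        using False v rooted_forest_roots_unconnected[OF forest root _ R_sub] by blast
    qed
  qed
  moreover have "s \<in> V - {\<rho>}" using s(1) new_roots_sub root by auto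
  ultimately have "((R - {\<rho>}) \<union> new_roots) \<inter> {v\<in>V - {\<rho>}. hconn rest u v} = {s}"
    using s hconn_sym by blast
  then show ?thesis by simp
next
  case False
  have "card (R \<inter> {v\<in>V. hconn F u v}) = 1" using rooted_forestsD(3)[OF forest] u by simp
  then show ?thesis
    using roots_outside_root_closure[OF isolated False, of R V] attach_detach
    unfolding new_roots_def by simp
qed

theorem rest_in_rooted_forests: "rest \<in> rooted_forests (V - {\<rho>}) ((R - {\<rho>}) \<union> new_roots)"
proof -
  have "rest \<subseteq> edges_on (V - {\<rho>})"
    using rooted_forestsD(1)[OF forest] unfolding rest_def edges_on_def by auto
  moreover have "\<not> has_cycle rest"
    using rooted_forestsD(2)[OF forest] has_cycle_mono[of rest F] unfolding rest_def by auto
  ultimately show ?thesis using rest_roots unfolding rooted_forests_def by blast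
qed

end

definition root_decompositions :: "nat set \<Rightarrow> nat set \<Rightarrow> nat \<Rightarrow> (nat set \<times> nat set set \<times> nat set set) set" where
  "root_decompositions V R \<rho> = (SIGMA S:Pow (V - R). SIGMA P:{P. partition_on S P}.
      rooted_forests (V - {\<rho>}) ((R - {\<rho>}) \<union> S))"

lemma attach_root_inj_on:
  assumes "\<rho> \<in> R"
  shows "inj_on (\<lambda>(S, P, F'). attach_root \<rho> P F') (root_decompositions V R \<rho>)"
proof (rule inj_onI)
  have disjoint_from_root: "\<rho> \<notin> \<Union>F'" "\<rho> \<notin> \<Union>P" if "(S, P, F') \<in> root_decompositions V R \<rho>" for S P F'
    using that assms unfolding root_decompositions_def rooted_forests_def edges_on_def
    by (auto simp: partition_on_def)
  fix x y assume x: "x \<in> root_decompositions V R \<rho>" and y: "y \<in> root_decompositions V R \<rho>"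
    and eq: "(\<lambda>(S, P, F'). attach_root \<rho> P F') x = (\<lambda>(S, P, F'). attach_root \<rho> P F') y"
  obtain S1 P1 F1 S2 P2 F2 where xy: "x = (S1, P1, F1)" "y = (S2, P2, F2)" by (cases x, cases y) auto
  note detach1 = detach_attach_root[OF disjoint_from_root[OF x[unfolded xy]]]
  note detach2 = detach_attach_root[OF disjoint_from_root[OF y[unfolded xy]]]
  have "F1 = F2" using detach1(1) detach2(1) eq unfolding xy by simp
  moreover have "P1 = P2" using detach1(2) detach2(2) eq unfolding xy by simp
  moreover have "S1 = S2"
    using x y \<open>P1 = P2\<close> unfolding xy root_decompositions_def by (auto simp: partition_on_def)
  ultimately show "x = y" unfolding xy by simp
qed

theorem root_decomposition_bij:
  assumes "finite V" "R \<subseteq> V" "\<rho> \<in> R"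
  shows "bij_betw (\<lambda>(S, P, F'). attach_root \<rho> P F') (root_decompositions V R \<rho>) (rooted_forests V R)"
proof (rule bij_betw_imageI)
  show "inj_on (\<lambda>(S, P, F'). attach_root \<rho> P F') (root_decompositions V R \<rho>)"
    using assms(3) by (rule attach_root_inj_on)
  show "(\<lambda>(S, P, F'). attach_root \<rho> P F') ` root_decompositions V R \<rho> = rooted_forests V R"
  proof (intro equalityI subsetI)
    fix F assume "F \<in> (\<lambda>(S, P, F'). attach_root \<rho> P F') ` root_decompositions V R \<rho>"
    then obtain S P F' where "(S, P, F') \<in> root_decompositions V R \<rho>" "F = attach_root \<rho> P F'" by auto
    then show "F \<in> rooted_forests V R"
      using root_attachment.attach_root_in_rooted_forests[of V R \<rho> S P F'] assms
      unfolding root_attachment_def root_decompositions_def by auto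
  next
    fix F assume F: "F \<in> rooted_forests V R"
    then interpret root_detachment V R \<rho> F using assms by unfold_locales
    have "(new_roots, blocks, rest) \<in> root_decompositions V R \<rho>"
      using new_roots_sub partition rest_in_rooted_forests unfolding root_decompositions_def by auto
    then show "F \<in> (\<lambda>(S, P, F'). attach_root \<rho> P F') ` root_decompositions V R \<rho>"
      using attach_detach by force
  qed
qed

section \<open>The number of rooted forests\<close>

text \<open>The recursion satisfied by the number of forests on \<open>n\<close> vertices with \<open>r\<close> prescribed roots.\<close>
fun forest_count :: "nat \<Rightarrow> nat \<Rightarrow> nat" where
  "forest_count 0 r = (if r = 0 then 1 else 0)"
| "forest_count (Suc n) r = (if r = 0 then 0 else
     (\<Sum>s\<le>Suc n - r. (Suc n - r choose s) * bell_poly s 1 * forest_count n (r - 1 + s)))"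

lemma card_root_decompositions:
  assumes "finite V"
  shows "card (root_decompositions V R \<rho>)
    = (\<Sum>S\<in>Pow (V - R). bell_poly (card S) 1 * card (rooted_forests (V - {\<rho>}) ((R - {\<rho>}) \<union> S)))"
proof -
  have fin: "finite S" if "S \<in> Pow (V - R)" for S using that assms finite_subset by auto
  have "card (root_decompositions V R \<rho>)
      = (\<Sum>S\<in>Pow (V - R). card {P. partition_on S P} * card (rooted_forests (V - {\<rho>}) ((R - {\<rho>}) \<union> S)))"
    unfolding root_decompositions_def using assms fin
    by (subst card_SigmaI) (auto simp: card_cartesian_product finitely_many_partition_on finite_rooted_forests)
  also have "\<dots> = (\<Sum>S\<in>Pow (V - R). bell_poly (card S) 1 * card (rooted_forests (V - {\<rho>}) ((R - {\<rho>}) \<union> S)))"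
    by (rule sum.cong[OF refl]) (simp add: card_partitions fin)
  finally show ?thesis .
qed

theorem card_rooted_forests:
  "finite V \<Longrightarrow> R \<subseteq> V \<Longrightarrow> card (rooted_forests V R) = forest_count (card V) (card R)"
proof (induction "card V" arbitrary: V R)
  case 0
  then have "V = {}" "R = {}" by auto
  moreover have "rooted_forests {} {} = {{}}"
    using no_cycle_empty by (auto simp: rooted_forests_def edges_on_def)
  ultimately show ?case by simp
next
  case (Suc n)
  show ?case
  proof (cases "R = {}")
    case True
    have "V \<noteq> {}" using Suc.hyps(2) by auto
    then have "rooted_forests V R = {}" using True by (auto simp: rooted_forests_def)
    then show ?thesis using True Suc.hyps(2)[symmetric] by simp
  next
    case False
    then obtain \<rho> where root: "\<rho> \<in> R" by blast
    have finR: "finite R" using Suc.prems finite_subset by auto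
    have card_M: "card (V - R) = Suc n - card R"
      using Suc.prems Suc.hyps(2) by (simp add: card_Diff_subset finR)
    have smaller: "card (rooted_forests (V - {\<rho>}) ((R - {\<rho>}) \<union> S)) = forest_count n (card R - 1 + card S)"
      if S: "S \<in> Pow (V - R)" for S
    proof -
      have "finite S" "(R - {\<rho>}) \<inter> S = {}" using S Suc.prems(1) finite_subset by auto
      then have "card ((R - {\<rho>}) \<union> S) = card R - 1 + card S"
        using finR root by (simp add: card_Un_disjoint)
      moreover have "card (V - {\<rho>}) = n" using root Suc.prems Suc.hyps(2) by auto
      moreover have "(R - {\<rho>}) \<union> S \<subseteq> V - {\<rho>}" using S Suc.prems root by auto
      ultimately show ?thesis using Suc.hyps(1)[of "V - {\<rho>}" "(R - {\<rho>}) \<union> S"] Suc.prems by simp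
    qed
    have "card (rooted_forests V R) = card (root_decompositions V R \<rho>)"
      using bij_betw_same_card[OF root_decomposition_bij[OF Suc.prems root]] by simp
    also have "\<dots> = (\<Sum>S\<in>Pow (V - R). bell_poly (card S) 1 * forest_count n (card R - 1 + card S))"
      unfolding card_root_decompositions[OF Suc.prems(1)] by (rule sum.cong[OF refl]) (simp add: smaller)
    also have "\<dots> = (\<Sum>k\<le>card (V - R). (card (V - R) choose k) * (bell_poly k 1 * forest_count n (card R - 1 + k)))"
      using sum_Pow_by_card[of "V - R" "\<lambda>k. bell_poly k 1 * forest_count n (card R - 1 + k)"] Suc.prems
      by simp
    also have "\<dots> = forest_count (Suc n) (card R)"
      using False finR card_M by (simp add: mult.assoc)
    finally show ?thesis using Suc.hyps(2) by simp
  qed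
qed

text \<open>The Bell polynomial identity behind the closed form: expanding \<open>b\<^sub>m(x+1)\<close> by
  \<open>bell_poly_add\<close> and its weighted variant.\<close>
lemma bell_poly_forest_identity:
  fixes x :: real
  shows "(x + 1) * (\<Sum>s\<le>m. of_nat (m choose s) * bell_poly s 1 * ((x - of_nat (m - s)) * bell_poly (m - s) x))
    = x * (x + 1 - of_nat m) * bell_poly m (x + 1)"
proof -
  have "(x + 1) * (\<Sum>s\<le>m. of_nat (m choose s) * bell_poly s 1 * ((x - of_nat (m - s)) * bell_poly (m - s) x))
      = (x + 1) * x * (\<Sum>s\<le>m. of_nat (m choose s) * bell_poly s 1 * bell_poly (m - s) x)
        - (x + 1) * (\<Sum>s\<le>m. of_nat (m choose s) * bell_poly s 1 * (of_nat (m - s) * bell_poly (m - s) x))"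
    by (simp add: sum_distrib_left sum_subtractf[symmetric] algebra_simps)
  also have "\<dots> = (x + 1) * x * bell_poly m (1 + x) - x * of_nat m * bell_poly m (x + 1)"
    by (simp only: bell_poly_add[symmetric] bell_poly_add_weighted)
  finally show ?thesis by (simp add: algebra_simps)
qed

theorem forest_count_closed: "r \<le> n \<Longrightarrow> n * forest_count n r = r * bell_poly (n - r) n"
proof (induction n arbitrary: r)
  case (Suc n)
  show ?case
  proof (cases "r = 0 \<or> n = 0")
    case True
    then show ?thesis using Suc.prems by (auto simp: bell_poly_def le_Suc_eq)
  next
    case False
    define m where "m = Suc n - r"
    have m: "m \<le> n" "r = Suc n - m" using False Suc.prems unfolding m_def by auto
    have IH: "real n * forest_count n (r - 1 + s) = (real n - real (m - s)) * bell_poly (m - s) (real n)"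
      if "s \<le> m" for s
    proof -
      have "r - 1 + s \<le> n" "n - (r - 1 + s) = m - s" "real (r - 1 + s) = real n - real (m - s)"
        using that m False by (auto simp: of_nat_diff)
      then show ?thesis using Suc.IH[of "r - 1 + s"] of_nat_bell_poly
        by (metis of_nat_mult)
    qed
    have "real n * (real (Suc n) * forest_count (Suc n) r)
        = real (Suc n) * (\<Sum>s\<le>m. real (m choose s) * bell_poly s 1 * (real n * forest_count n (r - 1 + s)))"
      using False unfolding m_def by (simp add: sum_distrib_left of_nat_bell_poly mult_ac)
    also have "\<dots> = real (Suc n) * (\<Sum>s\<le>m. real (m choose s) * bell_poly s 1
        * ((real n - real (m - s)) * bell_poly (m - s) (real n)))"
      by (rule arg_cong[where f = "\<lambda>t. real (Suc n) * t"], rule sum.cong[OF refl])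
         (simp only: atMost_iff IH)
    also have "\<dots> = real n * real r * bell_poly m (real (Suc n))"
      using bell_poly_forest_identity[of "real n" m] m by (simp add: of_nat_diff algebra_simps)
    finally have "real n * (real (Suc n) * forest_count (Suc n) r) = real n * (real r * bell_poly m (real (Suc n)))"
      by (simp only: mult.assoc)
    then have "real (Suc n) * forest_count (Suc n) r = real r * bell_poly m (real (Suc n))"
      using False by (simp only: mult_cancel_left of_nat_eq_0_iff) simp
    then have "real (Suc n * forest_count (Suc n) r) = real (r * bell_poly m (Suc n))"
      by (simp only: of_nat_mult of_nat_bell_poly)
    then show ?thesis unfolding m_def by (simp only: of_nat_eq_iff)
  qed
qed simp

section \<open>Rooted spanning hyperforests of the complete hypergraph\<close>

lemma rooted_hyperforests_iff:
  "(F, R) \<in> rooted_hyperforests n \<longleftrightarrow> R \<subseteq> {1..n} \<and> F \<in> rooted_forests {1..n} R"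
proof -
  have "hyperedges n = edges_on {1..n}" by (simp add: hyperedges_def edges_on_def)
  then show ?thesis
    unfolding rooted_hyperforests_def rooted_forests_def spanning_hyperforest_def hcomponents_def
    by (simp only: ball_simps mem_Collect_eq case_prod_conv) blast
qed

lemma card_components_rooted_forest:
  assumes "R \<subseteq> V" "F \<in> rooted_forests V R"
  shows "card ((\<lambda>u. {v\<in>V. hconn F u v}) ` V) = card R"
proof -
  let ?c = "\<lambda>u. {v\<in>V. hconn F u v}"
  have "?c u \<in> ?c ` R" if u: "u \<in> V" for u
  proof -
    obtain r where r: "R \<inter> ?c u = {r}"
      using rooted_forestsD(3)[OF assms(2) u] by (rule card_1_singletonE)
    then have "r \<in> R" and ur: "hconn F u r" by auto
    have "?c r = ?c u" using hconn_trans[OF ur] hconn_trans[OF hconn_sym[OF ur]] by auto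
    then show ?thesis using \<open>r \<in> R\<close> by (intro image_eqI[of _ ?c r]) simp_all
  qed
  then have "?c ` V \<subseteq> ?c ` R" by (simp add: image_subset_iff)
  then have "?c ` V = ?c ` R" using image_mono[OF assms(1)] by (rule antisym)
  moreover have "inj_on ?c R"
  proof (rule inj_onI)
    fix r1 r2 assume r: "r1 \<in> R" "r2 \<in> R" "?c r1 = ?c r2"
    then have "r2 \<in> ?c r1" using assms(1) by auto
    then have "hconn F r1 r2" by simp
    then show "r1 = r2" using rooted_forest_roots_unconnected[OF assms(2) r(1,2) assms(1)] by simp
  qed
  ultimately show ?thesis by (simp add: card_image)
qed

lemma card_hcomponents:
  assumes "(F, R) \<in> rooted_hyperforests n" shows "card (hcomponents n F) = card R"
  using card_components_rooted_forest[of R "{1..n}" F] assms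
  unfolding hcomponents_def rooted_hyperforests_iff by blast

lemma card_rooted_hyperforests_roots:
  "card {(F, R) \<in> rooted_hyperforests n. Q (card R)}
     = (\<Sum>R | R \<subseteq> {1..n} \<and> Q (card R). forest_count n (card R))"
proof -
  have "{(F, R) \<in> rooted_hyperforests n. Q (card R)}
      = prod.swap ` (SIGMA R:{R. R \<subseteq> {1..n} \<and> Q (card R)}. rooted_forests {1..n} R)"
    by (auto simp: rooted_hyperforests_iff)
  then have "card {(F, R) \<in> rooted_hyperforests n. Q (card R)}
      = card (SIGMA R:{R. R \<subseteq> {1..n} \<and> Q (card R)}. rooted_forests {1..n} R)"
    by (simp add: card_image)
  also have "\<dots> = (\<Sum>R | R \<subseteq> {1..n} \<and> Q (card R). card (rooted_forests {1..n} R))"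
    by (rule card_SigmaI) (auto simp: finite_rooted_forests)
  finally show ?thesis by (simp add: card_rooted_forests)
qed

lemma choose_forest_count:
  assumes "1 \<le> r" "r \<le> n"
  shows "(n choose r) * forest_count n r = ((n - 1) choose (r - 1)) * bell_poly (n - r) n"
proof -
  have "n * ((n choose r) * forest_count n r) = (r * (n choose r)) * bell_poly (n - r) n"
    using forest_count_closed[OF assms(2)] by (simp add: mult_ac)
  also have "\<dots> = n * (((n - 1) choose (r - 1)) * bell_poly (n - r) n)"
    using times_binomial_minus1_eq[of r n] assms by (simp add: mult_ac)
  finally show ?thesis using assms by simp
qed

theorem card_rooted_hyperforests_components:
  assumes "1 \<le> r" "r \<le> n"
  shows "card {(F, R) \<in> rooted_hyperforests n. card (hcomponents n F) = r}
    = ((n - 1) choose (r - 1)) * bell_poly (n - r) n"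
proof -
  have "{(F, R) \<in> rooted_hyperforests n. card (hcomponents n F) = r} = {(F, R) \<in> rooted_hyperforests n. card R = r}"
    by (rule Collect_cong) (auto simp: card_hcomponents)
  then have "card {(F, R) \<in> rooted_hyperforests n. card (hcomponents n F) = r}
      = card {R. R \<subseteq> {1..n} \<and> card R = r} * forest_count n r"
    using card_rooted_hyperforests_roots[of n "\<lambda>k. k = r"] by simp
  also have "\<dots> = ((n - 1) choose (r - 1)) * bell_poly (n - r) n"
    using n_subsets[of "{1..n}" r] choose_forest_count[OF assms] by simp
  finally show ?thesis .
qed

theorem card_rooted_hyperforests:
  assumes "1 \<le> n"
  shows "n * card (rooted_hyperforests n) = bell_poly n n"
proof -
  obtain m where m: "n = Suc m" using assms by (cases n) auto
  have "card (rooted_hyperforests n) = (\<Sum>R\<in>Pow {1..n}. forest_count n (card R))"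
    using card_rooted_hyperforests_roots[of n "\<lambda>_. True"] by (simp add: Pow_def)
  also have "\<dots> = (\<Sum>k\<le>Suc m. (Suc m choose k) * forest_count (Suc m) k)"
    using sum_Pow_by_card[of "{1..n}" "forest_count n"] m by simp
  also have "\<dots> = (\<Sum>k\<le>m. (Suc m choose Suc k) * forest_count (Suc m) (Suc k))"
    by (simp only: sum.atMost_Suc_shift) simp
  also have "\<dots> = (\<Sum>k\<le>m. (m choose k) * bell_poly (m - k) n)"
    using choose_forest_count[of "Suc _" n] m by (intro sum.cong refl) (simp del: forest_count.simps)
  also have "\<dots> = (\<Sum>k\<le>m. (m choose k) * bell_poly k n)"
    using sum_choose_reflect[of m "\<lambda>k. bell_poly k n"] by simp
  finally show ?thesis using bell_poly_Suc[of m n] m by simp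
qed

lemma rooted_hyperforests_one_component:
  "{(F, R) \<in> rooted_hyperforests n. card (hcomponents n F) = 1}
     = {F. spanning_hypertree n F} \<times> ((\<lambda>v. {v}) ` {1..n})"
proof (intro equalityI subsetI)
  fix x assume "x \<in> {(F, R) \<in> rooted_hyperforests n. card (hcomponents n F) = 1}"
  then obtain F R where x: "x = (F, R)" "(F, R) \<in> rooted_hyperforests n" "card (hcomponents n F) = 1"
    by auto
  then have "card R = 1" using card_hcomponents by simp
  then obtain v where "R = {v}" by (rule card_1_singletonE)
  then show "x \<in> {F. spanning_hypertree n F} \<times> ((\<lambda>v. {v}) ` {1..n})"
    using x unfolding spanning_hypertree_def rooted_hyperforests_def by auto
next
  fix x assume "x \<in> {F. spanning_hypertree n F} \<times> ((\<lambda>v. {v}) ` {1..n})"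
  then obtain F v where x: "x = (F, {v})" "spanning_hypertree n F" "v \<in> {1..n}" by auto
  have one: "card (hcomponents n F) = 1" using x(2) unfolding spanning_hypertree_def by simp
  have "{w\<in>{1..n}. hconn F v w} \<in> hcomponents n F" using x(3) unfolding hcomponents_def by auto
  then have "hcomponents n F = {{w\<in>{1..n}. hconn F v w}}" using one by (metis card_1_singletonE singletonD)
  then have "(F, {v}) \<in> rooted_hyperforests n"
    using x unfolding rooted_hyperforests_def spanning_hypertree_def by auto
  then show "x \<in> {(F, R) \<in> rooted_hyperforests n. card (hcomponents n F) = 1}" using x(1) one by auto
qed

theorem card_spanning_hypertrees:
  assumes "1 \<le> n"
  shows "card {F. spanning_hypertree n F} * n = bell_poly (n - 1) n"
proof -
  have "card {F. spanning_hypertree n F} * n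
      = card {(F, R) \<in> rooted_hyperforests n. card (hcomponents n F) = 1}"
    unfolding rooted_hyperforests_one_component by (simp add: card_cartesian_product card_image)
  also have "\<dots> = bell_poly (n - 1) n"
    using card_rooted_hyperforests_components[of 1 n] assms by simp
  finally show ?thesis .
qed

lemma bell_poly_div_eq_sum_powi:
  assumes "n \<noteq> 0"
  shows "real (bell_poly m n) / real n = (\<Sum>l\<le>m. real (Stirling m l) * real n powi (int l - 1))"
proof -
  have "real n powi (int l - 1) = real n ^ l / real n" for l
    using assms by (simp add: power_int_diff)
  then show ?thesis by (simp add: bell_poly_def sum_divide_distrib)
qed

theorem mainTheorem14:
  fixes n :: nat
  assumes "1 \<le> n"
  shows "(\<forall>r. 1 \<le> r \<and> r \<le> n \<longrightarrow>
           card {(F, R) \<in> rooted_hyperforests n. card (hcomponents n F) = r}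
             = ((n - 1) choose (r - 1)) * bell_poly (n - r) n
         \<and> bell_poly (n - r) n = (\<Sum>l\<le>n - r. Stirling (n - r) l * n ^ l))
    \<and> real (card (rooted_hyperforests n)) = real (bell_poly n n) / real n
    \<and> real (card {F. spanning_hypertree n F}) = real (bell_poly (n - 1) n) / real n
    \<and> real (bell_poly (n - 1) n) / real n
           = (\<Sum>l\<le>n - 1. real (Stirling (n - 1) l) * real n powi (int l - 1))"
proof (intro conjI allI impI)
  have n: "real n \<noteq> 0" using assms by simp
  fix r assume "1 \<le> r \<and> r \<le> n"
  then show "card {(F, R) \<in> rooted_hyperforests n. card (hcomponents n F) = r}
      = ((n - 1) choose (r - 1)) * bell_poly (n - r) n"
    by (simp add: card_rooted_hyperforests_components)
  show "bell_poly (n - r) n = (\<Sum>l\<le>n - r. Stirling (n - r) l * n ^ l)"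
    by (simp add: bell_poly_def)
next
  show "real (card (rooted_hyperforests n)) = real (bell_poly n n) / real n"
    using card_rooted_hyperforests[OF assms] assms by (simp add: field_simps flip: of_nat_mult)
  show "real (card {F. spanning_hypertree n F}) = real (bell_poly (n - 1) n) / real n"
    using card_spanning_hypertrees[OF assms] assms by (simp add: field_simps flip: of_nat_mult)
  show "real (bell_poly (n - 1) n) / real n
      = (\<Sum>l\<le>n - 1. real (Stirling (n - 1) l) * real n powi (int l - 1))"
    using assms by (simp add: bell_poly_div_eq_sum_powi)
qed

end
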